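(* Let $H=(V,E)$ be a (finite) hypergraph. Then $H$ is perturbable if and only if $H$ does not have a perfect fractional matching.
   Context: For a hypergraph $H=(V,E)$ with $V=\{v_1,\dots,v_n\}$, a perturbation on $H$ is a function $p:V\to\mathbb{R}$ such that $\sum_{i=1}^n p(v_i)=0$ and for every edge $e\in E$, $p(e)=\sum_{v\in e}p(v)<0$. $H$ is perturbable if a perturbation on $H$ exists. A fractional matching is a function $m:E\to[0,1]$ such that for every $v\in V$, $\sum_{e\ni v} m(e)\leq 1$; it is perfect if $\sum_{e\ni v} m(e)=1$ for every $v\in V$. *)

theory Defs
  imports Main "HOL-Library.Multiset" Complex_Main
begin

definition hypergraph :: "'a set \<Rightarrow> 'a set set \<Rightarrow> bool" where
  "hypergraph V E \<longleftrightarrow> finite V \<and> V \<noteq> {} \<and> (\<forall>e\<in>E. e \<noteq> {} \<and> e \<subseteq> V)"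

definition perturbation :: "'a set \<Rightarrow> 'a set set \<Rightarrow> ('a \<Rightarrow> real) \<Rightarrow> bool" where
  "perturbation V E p \<longleftrightarrow> (\<Sum>v\<in>V. p v) = 0 \<and> (\<forall>e\<in>E. (\<Sum>v\<in>e. p v) < 0)"

definition perturbable :: "'a set \<Rightarrow> 'a set set \<Rightarrow> bool" where
  "perturbable V E \<longleftrightarrow> (\<exists>p. perturbation V E p)"

definition fractional_matching :: "'a set \<Rightarrow> 'a set set \<Rightarrow> ('a set \<Rightarrow> real) \<Rightarrow> bool" where
  "fractional_matching V E m \<longleftrightarrow> (\<forall>e\<in>E. 0 \<le> m e \<and> m e \<le> 1)
     \<and> (\<forall>v\<in>V. (\<Sum>e\<in>{e\<in>E. v \<in> e}. m e) \<le> 1)"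

definition perfect_fractional_matching :: "'a set \<Rightarrow> 'a set set \<Rightarrow> ('a set \<Rightarrow> real) \<Rightarrow> bool" where
  "perfect_fractional_matching V E m \<longleftrightarrow> fractional_matching V E m
     \<and> (\<forall>v\<in>V. (\<Sum>e\<in>{e\<in>E. v \<in> e}. m e) = 1)"

end

theory Submission
  imports Defs
begin

(* Apply Gordan's theorem of the alternative to the vectors a_e = 1_e - (|e|/|V|) 1, one per edge.
   Either some x has inner product < 0 with every a_e, and then x minus its mean is a
   perturbation, or a nonzero nonnegative combination of the a_e vanishes, which says that a
   nonnegative edge weighting puts the same positive load on every vertex; rescaled, this is a
   perfect fractional matching. Both cannot exist, since double counting gives
   0 = sum_v p(v) = sum_e m(e) p(e) < 0.
   Gordan's theorem is proved by induction on the number of vectors: given a solution x for the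
   old vectors, project them along the new one onto the hyperplane orthogonal to x. *)

definition inner_on :: "'a set \<Rightarrow> ('a \<Rightarrow> real) \<Rightarrow> ('a \<Rightarrow> real) \<Rightarrow> real" where
  "inner_on V a x = (\<Sum>v\<in>V. a v * x v)"

lemma inner_on_lincomb_right:
  "inner_on V a (\<lambda>v. s * x v + t * y v) = s * inner_on V a x + t * inner_on V a y"
  by (simp add: inner_on_def sum.distrib sum_distrib_left algebra_simps)

lemma inner_on_lincomb_left:
  "inner_on V (\<lambda>v. s * a v + t * b v) x = s * inner_on V a x + t * inner_on V b x"
  by (simp add: inner_on_def sum.distrib sum_distrib_left algebra_simps)

lemma inner_on_self_pos:
  assumes "finite V" "v \<in> V" "a v \<noteq> 0"
  shows "inner_on V a a > 0"
  unfolding inner_on_def using assms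
  by (intro sum_pos2[of V v]) (auto simp: zero_less_mult_iff linorder_neq_iff)

definition semipositive_dependence ::
    "'a set \<Rightarrow> 'i set \<Rightarrow> ('i \<Rightarrow> 'a \<Rightarrow> real) \<Rightarrow> ('i \<Rightarrow> real) \<Rightarrow> bool" where
  "semipositive_dependence V I a l \<longleftrightarrow>
     (\<forall>i\<in>I. 0 \<le> l i) \<and> (\<exists>i\<in>I. 0 < l i) \<and> (\<forall>v\<in>V. (\<Sum>i\<in>I. l i * a i v) = 0)"

lemma eventually_at_right_0_all_negative:
  fixes f g :: "'i \<Rightarrow> real"
  assumes "finite I" "\<forall>i\<in>I. f i < 0"
  shows "\<forall>\<^sub>F \<delta> in at_right 0. \<forall>i\<in>I. f i + \<delta> * g i < 0"
proof (rule eventually_ball_finite[OF assms(1)], intro ballI)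
  fix i assume "i \<in> I"
  have "((\<lambda>\<delta>. f i + \<delta> * g i) \<longlongrightarrow> f i + 0 * g i) (at_right 0)"
    by (intro tendsto_intros)
  then show "\<forall>\<^sub>F \<delta> in at_right 0. f i + \<delta> * g i < 0"
    using assms(2) \<open>i \<in> I\<close> by (intro order_tendstoD(2)) auto
qed

lemma semipositive_dependence_insert_zero:
  assumes "finite I" "j \<notin> I" "semipositive_dependence V I a l"
  shows "semipositive_dependence V (insert j I) a (l(j := 0))"
proof -
  have same: "\<forall>i\<in>I. (l(j := 0)) i = l i"
    using assms(2) by auto
  then have "(\<Sum>i\<in>insert j I. (l(j := 0)) i * a i v) = (\<Sum>i\<in>I. l i * a i v)" for v
    using assms(1,2) by simp
  moreover have "\<forall>i\<in>insert j I. 0 \<le> (l(j := 0)) i" "\<exists>i\<in>insert j I. 0 < (l(j := 0)) i"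
    using assms(3) same by (auto simp: semipositive_dependence_def)
  ultimately show ?thesis
    using assms(3) by (simp add: semipositive_dependence_def)
qed

text \<open>Inductive step of Gordan's theorem when \<open>x\<close> solves the system for \<open>I\<close> but
  \<open>\<langle>a j, x\<rangle> \<ge> 0\<close>: the vectors
  \<open>\<langle>a j, x\<rangle> a i - \<langle>a i, x\<rangle> a j\<close> are (multiples of) the \<open>a i\<close> projected along \<open>a j\<close>
  onto the hyperplane \<open>\<langle>-, x\<rangle> = 0\<close>, and either alternative for them lifts to the whole family.\<close>

lemma semipositive_dependence_lift:
  assumes "finite I" "j \<notin> I"
    and x: "\<forall>i\<in>I. inner_on V (a i) x < 0" "0 \<le> inner_on V (a j) x"
    and l: "semipositive_dependence V I
              (\<lambda>i v. inner_on V (a j) x * a i v + (- inner_on V (a i) x) * a j v) l"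
  shows "\<exists>l'. semipositive_dependence V (insert j I) a l'"
proof -
  define c where "c = inner_on V (a j) x"
  define l' where "l' = (\<lambda>i. if i = j then (\<Sum>k\<in>I. l k * (- inner_on V (a k) x)) else c * l i)"
  have l_nonneg: "\<forall>i\<in>I. 0 \<le> l i" and l_comb:
    "\<forall>v\<in>V. (\<Sum>i\<in>I. l i * (c * a i v + (- inner_on V (a i) x) * a j v)) = 0"
    using l by (auto simp: semipositive_dependence_def c_def)
  obtain k where k: "k \<in> I" "0 < l k"
    using l by (auto simp: semipositive_dependence_def)
  have "0 < (\<Sum>k\<in>I. l k * (- inner_on V (a k) x))"
    using k l_nonneg x(1) assms(1)
    by (intro sum_pos2[of I k]) (auto simp: mult_pos_neg mult_nonneg_nonpos less_imp_le)
  then have l'_j: "0 < l' j" by (simp add: l'_def)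
  have "(\<Sum>i\<in>insert j I. l' i * a i v) = 0" if "v \<in> V" for v
  proof -
    have "(\<Sum>i\<in>insert j I. l' i * a i v)
          = (\<Sum>k\<in>I. l k * (- inner_on V (a k) x)) * a j v + (\<Sum>i\<in>I. c * l i * a i v)"
      using assms(1,2) by (simp add: l'_def, intro sum.cong) auto
    also have "\<dots> = (\<Sum>i\<in>I. l i * (- inner_on V (a i) x) * a j v + c * l i * a i v)"
      by (simp add: sum.distrib sum_distrib_right sum_subtractf sum_negf)
    also have "\<dots> = (\<Sum>i\<in>I. l i * (c * a i v + (- inner_on V (a i) x) * a j v))"
      by (simp add: algebra_simps)
    also have "\<dots> = 0" using l_comb that by blast
    finally show ?thesis .
  qed
  moreover have "\<forall>i\<in>insert j I. 0 \<le> l' i"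
    using l_nonneg l'_j x(2) by (auto simp: l'_def c_def)
  ultimately show ?thesis
    using l'_j unfolding semipositive_dependence_def by blast
qed

lemma negative_solution_lift:
  assumes "finite I" "finite V" "v\<^sub>0 \<in> V" "a j v\<^sub>0 \<noteq> 0"
    and y: "\<forall>i\<in>I. inner_on V
              (\<lambda>v. inner_on V (a j) x * a i v + (- inner_on V (a i) x) * a j v) y < 0"
  shows "\<exists>z. \<forall>i\<in>insert j I. inner_on V (a i) z < 0"
proof -
  define c where "c = inner_on V (a j) x"
  define w where "w = (\<lambda>v. c * y v + (- inner_on V (a j) y) * x v)"
  have "inner_on V (a i) w
        = inner_on V (\<lambda>v. c * a i v + (- inner_on V (a i) x) * a j v) y" for i
    unfolding w_def inner_on_lincomb_left inner_on_lincomb_right by simp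
  then have w: "\<forall>i\<in>I. inner_on V (a i) w < 0"
    using y by (simp add: c_def)
  have w_j: "inner_on V (a j) w = 0"
    unfolding w_def inner_on_lincomb_right c_def by simp
  \<comment> \<open>\<open>w\<close> is orthogonal to \<open>a j\<close>, so a small step along \<open>-a j\<close> makes \<open>\<langle>a j, -\<rangle>\<close> negative
      without spoiling the strict inequalities for \<open>I\<close>.\<close>
  obtain \<epsilon> where "0 < \<epsilon>" and \<epsilon>: "\<forall>i\<in>I. inner_on V (a i) w + \<epsilon> * - inner_on V (a i) (a j) < 0"
    using eventually_happens'[OF trivial_limit_at_right_real, OF eventually_conj[OF
          eventually_at_right_less
          eventually_at_right_0_all_negative[OF assms(1) w, of "\<lambda>i. - inner_on V (a i) (a j)"]]]
    by blast
  define z where "z = (\<lambda>v. 1 * w v + (- \<epsilon>) * a j v)"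
  have "inner_on V (a j) z < 0"
    using \<open>0 < \<epsilon>\<close> inner_on_self_pos[of V v\<^sub>0 "a j"] assms(2-4)
    unfolding z_def inner_on_lincomb_right w_j by simp
  moreover have "\<forall>i\<in>I. inner_on V (a i) z < 0"
    using \<epsilon> unfolding z_def inner_on_lincomb_right by simp
  ultimately show ?thesis by blast
qed

theorem gordan_alternative:
  fixes a :: "'i \<Rightarrow> 'a \<Rightarrow> real"
  assumes "finite I" "finite V"
  shows "(\<exists>x. \<forall>i\<in>I. inner_on V (a i) x < 0) \<or> (\<exists>l. semipositive_dependence V I a l)"
  using assms(1)
proof (induction I arbitrary: a rule: finite_induct)
  case empty
  then show ?case by simp
next
  case (insert j I)
  consider (zero) "\<forall>v\<in>V. a j v = 0"
    | (dependence) "\<exists>l. semipositive_dependence V I a l"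
    | (solution) x v\<^sub>0 where "\<forall>i\<in>I. inner_on V (a i) x < 0" "v\<^sub>0 \<in> V" "a j v\<^sub>0 \<noteq> 0"
    using insert.IH[of a] by blast
  then show ?case
  proof cases
    case zero
    have "(\<Sum>i\<in>insert j I. of_bool (i = j) * a i v) = a j v" for v
      using insert.hyps by simp
    then have "semipositive_dependence V (insert j I) a (\<lambda>i. of_bool (i = j))"
      using zero by (simp add: semipositive_dependence_def)
    then show ?thesis by blast
  next
    case dependence
    then show ?thesis
      using semipositive_dependence_insert_zero[OF insert.hyps] by blast
  next
    case (solution x v\<^sub>0)
    show ?thesis
    proof (cases "inner_on V (a j) x < 0")
      case True
      then show ?thesis using solution(1) by auto
    next
      case False
      from insert.IH[of "\<lambda>i v. inner_on V (a j) x * a i v + (- inner_on V (a i) x) * a j v"]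
      show ?thesis
        using semipositive_dependence_lift[OF insert.hyps solution(1)]
          negative_solution_lift[where a = a and j = j, OF insert.hyps(1) assms(2) solution(2,3)] False
        by (meson not_less)
    qed
  qed
qed

lemma hypergraph_finite_edges: "hypergraph V E \<Longrightarrow> finite E"
  unfolding hypergraph_def by (meson Pow_iff finite_Pow_iff finite_subset subsetI)

lemma sum_vertex_loads:
  fixes f :: "'a \<Rightarrow> 'b::comm_semiring_0" and m :: "'a set \<Rightarrow> 'b"
  assumes "finite V" "finite E" "\<forall>e\<in>E. e \<subseteq> V"
  shows "(\<Sum>v\<in>V. f v * (\<Sum>e\<in>{e\<in>E. v \<in> e}. m e)) = (\<Sum>e\<in>E. m e * (\<Sum>v\<in>e. f v))"
proof -
  have "(\<Sum>v\<in>V. f v * (\<Sum>e\<in>{e\<in>E. v \<in> e}. m e))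
        = (\<Sum>v\<in>V. \<Sum>e\<in>{e\<in>E. v \<in> e}. f v * m e)"
    by (simp add: sum_distrib_left)
  also have "\<dots> = (\<Sum>e\<in>E. \<Sum>v\<in>{v\<in>V. v \<in> e}. f v * m e)"
    by (rule sum.swap_restrict[OF assms(1,2)])
  also have "\<dots> = (\<Sum>e\<in>E. m e * (\<Sum>v\<in>e. f v))"
  proof (rule sum.cong)
    fix e assume "e \<in> E"
    then have "{v\<in>V. v \<in> e} = e" using assms(3) by auto
    then show "(\<Sum>v\<in>{v\<in>V. v \<in> e}. f v * m e) = m e * (\<Sum>v\<in>e. f v)"
      by (simp add: sum_distrib_left mult.commute)
  qed simp
  finally show ?thesis .
qed

theorem perturbation_imp_no_perfect_fractional_matching:
  assumes "hypergraph V E" "perturbation V E p"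
  shows "\<not> perfect_fractional_matching V E m"
proof
  assume m: "perfect_fractional_matching V E m"
  have load: "\<forall>v\<in>V. (\<Sum>e\<in>{e\<in>E. v \<in> e}. m e) = 1" and m_nonneg: "\<forall>e\<in>E. 0 \<le> m e"
    using m by (auto simp: perfect_fractional_matching_def fractional_matching_def)
  have p_neg: "\<forall>e\<in>E. (\<Sum>v\<in>e. p v) < 0"
    using assms(2) by (simp add: perturbation_def)
  have "(\<Sum>e\<in>E. m e * (\<Sum>v\<in>e. p v)) = (\<Sum>v\<in>V. p v)"
    using sum_vertex_loads[of V E p m] load assms(1) hypergraph_finite_edges[OF assms(1)]
    by (simp add: hypergraph_def)
  also have "\<dots> = 0"
    using assms(2) by (simp add: perturbation_def)
  finally have "(\<Sum>e\<in>E. - (m e * (\<Sum>v\<in>e. p v))) = 0"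
    by (simp add: sum_negf)
  then have "\<forall>e\<in>E. m e * (\<Sum>v\<in>e. p v) = 0"
    using m_nonneg p_neg hypergraph_finite_edges[OF assms(1)]
    by (subst (asm) sum_nonneg_eq_0_iff) (auto simp: mult_nonneg_nonpos less_imp_le)
  then have "\<forall>e\<in>E. m e = 0"
    using p_neg by fastforce
  moreover obtain v where "v \<in> V"
    using assms(1) by (auto simp: hypergraph_def)
  ultimately show False
    using load by auto
qed

definition edge_vector :: "'a set \<Rightarrow> 'a set \<Rightarrow> 'a \<Rightarrow> real" where
  "edge_vector V e v = of_bool (v \<in> e) - real (card e) / real (card V)"

lemma inner_on_edge_vector:
  assumes "finite V" "e \<subseteq> V"
  shows "inner_on V (edge_vector V e) x = (\<Sum>v\<in>e. x v - (\<Sum>u\<in>V. x u) / real (card V))"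
proof -
  have "inner_on V (edge_vector V e) x
        = (\<Sum>v\<in>V. of_bool (v \<in> e) * x v) - real (card e) / real (card V) * (\<Sum>v\<in>V. x v)"
    by (simp add: inner_on_def edge_vector_def left_diff_distrib sum_subtractf sum_distrib_left)
  also have "(\<Sum>v\<in>V. of_bool (v \<in> e) * x v) = (\<Sum>v\<in>e. x v)"
    using assms by (simp add: Int_absorb1)
  finally show ?thesis
    by (simp add: sum_subtractf)
qed

lemma sum_edge_vector:
  assumes "finite E"
  shows "(\<Sum>e\<in>E. l e * edge_vector V e v)
         = (\<Sum>e\<in>{e\<in>E. v \<in> e}. l e) - (\<Sum>e\<in>E. l e * real (card e)) / real (card V)"
  using assms
  by (simp add: edge_vector_def right_diff_distrib sum_subtractf sum_divide_distrib Int_def)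

lemma perturbation_of_negative_solution:
  assumes "hypergraph V E" "\<forall>e\<in>E. inner_on V (edge_vector V e) x < 0"
  shows "perturbation V E (\<lambda>v. x v - (\<Sum>u\<in>V. x u) / real (card V))"
proof -
  have "finite V" "card V > 0" "\<forall>e\<in>E. e \<subseteq> V"
    using assms(1) by (auto simp: hypergraph_def card_gt_0_iff)
  then show ?thesis
    using assms(2) by (simp add: perturbation_def sum_subtractf inner_on_edge_vector)
qed

lemma perfect_fractional_matching_of_uniform_load:
  assumes "hypergraph V E" "\<forall>e\<in>E. 0 \<le> l e" "0 < C"
    and load: "\<forall>v\<in>V. (\<Sum>e\<in>{e\<in>E. v \<in> e}. l e) = C"
  shows "perfect_fractional_matching V E (\<lambda>e. l e / C)"
proof -
  have load': "(\<Sum>e\<in>{e\<in>E. v \<in> e}. l e / C) = 1" if "v \<in> V" for v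
    using load that \<open>0 < C\<close> by (simp flip: sum_divide_distrib)
  have "l e / C \<le> 1" if e: "e \<in> E" for e
  proof -
    obtain v where "v \<in> e" "v \<in> V"
      using assms(1) e by (auto simp: hypergraph_def)
    then have "l e / C \<le> (\<Sum>e\<in>{e\<in>E. v \<in> e}. l e / C)"
      using assms(2,3) hypergraph_finite_edges[OF assms(1)] e by (intro member_le_sum) auto
    then show ?thesis using load' \<open>v \<in> V\<close> by simp
  qed
  then show ?thesis
    using load' assms(2,3)
    by (simp add: perfect_fractional_matching_def fractional_matching_def)
qed

lemma perfect_fractional_matching_of_dependence:
  assumes "hypergraph V E" "semipositive_dependence V E (edge_vector V) l"
  shows "\<exists>m. perfect_fractional_matching V E m"
proof -
  define C where "C = (\<Sum>e\<in>E. l e * real (card e)) / real (card V)"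
  have "finite V" "card V > 0" "finite E" "\<forall>e\<in>E. e \<noteq> {} \<and> e \<subseteq> V"
    using assms(1) hypergraph_finite_edges by (auto simp: hypergraph_def card_gt_0_iff)
  have l_nonneg: "\<forall>e\<in>E. 0 \<le> l e"
    using assms(2) by (simp add: semipositive_dependence_def)
  obtain e\<^sub>0 where "e\<^sub>0 \<in> E" "0 < l e\<^sub>0"
    using assms(2) by (auto simp: semipositive_dependence_def)
  moreover have "0 < card e\<^sub>0"
    using \<open>e\<^sub>0 \<in> E\<close> \<open>finite V\<close> \<open>\<forall>e\<in>E. e \<noteq> {} \<and> e \<subseteq> V\<close>
    by (meson card_gt_0_iff finite_subset)
  ultimately have "0 < (\<Sum>e\<in>E. l e * real (card e))"
    using l_nonneg \<open>finite E\<close> by (intro sum_pos2[of E e\<^sub>0]) auto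
  then have "0 < C"
    using \<open>card V > 0\<close> by (simp add: C_def)
  moreover have "\<forall>v\<in>V. (\<Sum>e\<in>{e\<in>E. v \<in> e}. l e) = C"
    using assms(2) sum_edge_vector[OF \<open>finite E\<close>]
    by (simp add: semipositive_dependence_def C_def)
  ultimately show ?thesis
    using perfect_fractional_matching_of_uniform_load[OF assms(1) l_nonneg] by blast
qed

theorem theorem2p2:
  fixes V :: "'a set" and E :: "'a set set"
  assumes "hypergraph V E"
  shows "perturbable V E \<longleftrightarrow> \<not> (\<exists>m. perfect_fractional_matching V E m)"
proof
  show "\<not> (\<exists>m. perfect_fractional_matching V E m)" if "perturbable V E"
    using that perturbation_imp_no_perfect_fractional_matching[OF assms]
    by (auto simp: perturbable_def)
next
  assume no_matching: "\<not> (\<exists>m. perfect_fractional_matching V E m)"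
  have "finite E" "finite V"
    using assms hypergraph_finite_edges by (auto simp: hypergraph_def)
  with gordan_alternative[of E V "edge_vector V"]
  consider x where "\<forall>e\<in>E. inner_on V (edge_vector V e) x < 0"
    | l where "semipositive_dependence V E (edge_vector V) l"
    by blast
  then show "perturbable V E"
  proof cases
    case 1
    then show ?thesis
      using perturbation_of_negative_solution[OF assms] by (auto simp: perturbable_def)
  next
    case 2
    then show ?thesis
      using perfect_fractional_matching_of_dependence[OF assms] no_matching by blast
  qed
qed

end
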